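(* Let $S\subseteq\mathcal S_d$ be nonempty, $[d]$ partitioned into groups $G_1,\dots,G_g$, $\bar\alpha,\bar\beta\in[0,1]^g$, $k\in[d]$, and assume the set $\mathcal F$ of $(\bar\alpha,\bar\beta)$-$k$-fair rankings in $\mathcal S_d$ is nonempty. Let $\tau$ be an $(\bar\alpha,\bar\beta)$-$k$-fair top-$k$ ranking minimizing $2\sum_{\pi\in S}\sum_{i\in D_\tau}(\pi(i)-\tau(i))\mathbb{1}[\tau(i)<\pi(i)]$, and let $\sigma\in\mathcal S_d$ be a ranking with $\sigma(a)=\tau(a)$ for all $a\in D_\tau$ minimizing $2\sum_{\pi\in S}\sum_{i\in[d]}(\pi(i)-\sigma(i))\mathbb{1}[\sigma(i)<\pi(i)]$ among such extensions. Then $\sigma\in\mathcal F$ and $\sum_{\pi\in S}\kappa(\pi,\sigma)\le 4\min_{\sigma'\in\mathcal F}\sum_{\pi\in S}\kappa(\pi,\sigma')$.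
   Context: $\mathcal{S}_d$ is the set of rankings of $[d]$, $\pi(a)$ the rank of $a$. A top-$k$ ranking is a bijection $\tau:D_\tau\to[k]$, $D_\tau\subseteq[d]$. A full or top-$k$ ranking is $(\bar\alpha,\bar\beta)$-$k$-fair if for every $i\in[g]$ its top $k$ positions contain at least $\lfloor\alpha_i k\rfloor$ and at most $\lceil\beta_i k\rceil$ members of $G_i$. $\kappa(\pi,\sigma)$ is the Kendall-tau distance: the number of unordered pairs $\{a,b\}$ ordered differently by $\pi$ and $\sigma$. $\mathbb{1}[\cdot]$ is the indicator function. *)

theory Defs
  imports Complex_Main "HOL-Combinatorics.Permutations"
begin

text \<open>Full rankings of [d] = {1..d}: permutations of {1..d} (identity outside);
  \<pi> a is the rank of item a.\<close>
definition rankings :: "nat \<Rightarrow> (nat \<Rightarrow> nat) set" where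
  "rankings d = {\<pi>. \<pi> permutes {1..d}}"

definition is_topk :: "nat \<Rightarrow> nat \<Rightarrow> nat set \<Rightarrow> (nat \<Rightarrow> nat) \<Rightarrow> bool" where
  "is_topk d k D \<tau> \<longleftrightarrow> D \<subseteq> {1..d} \<and> bij_betw \<tau> D {1..k}"

definition is_partition :: "nat \<Rightarrow> nat \<Rightarrow> (nat \<Rightarrow> nat set) \<Rightarrow> bool" where
  "is_partition d g G \<longleftrightarrow>
     (\<Union>i\<in>{1..g}. G i) = {1..d} \<and>
     (\<forall>i\<in>{1..g}. \<forall>j\<in>{1..g}. i \<noteq> j \<longrightarrow> G i \<inter> G j = {})"

definition fair_full ::
  "nat \<Rightarrow> (nat \<Rightarrow> nat set) \<Rightarrow> (nat \<Rightarrow> real) \<Rightarrow> (nat \<Rightarrow> real) \<Rightarrow> nat \<Rightarrow> (nat \<Rightarrow> nat) \<Rightarrow> bool" where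
  "fair_full g G \<alpha> \<beta> k \<pi> \<longleftrightarrow>
     (\<forall>i\<in>{1..g}. let c = card {a\<in>G i. \<pi> a \<le> k} in
        \<lfloor>\<alpha> i * real k\<rfloor> \<le> int c \<and> int c \<le> \<lceil>\<beta> i * real k\<rceil>)"

definition fair_topk ::
  "nat \<Rightarrow> (nat \<Rightarrow> nat set) \<Rightarrow> (nat \<Rightarrow> real) \<Rightarrow> (nat \<Rightarrow> real) \<Rightarrow> nat \<Rightarrow> nat set \<Rightarrow> (nat \<Rightarrow> nat) \<Rightarrow> bool" where
  "fair_topk g G \<alpha> \<beta> k D \<tau> \<longleftrightarrow>
     (\<forall>i\<in>{1..g}. let c = card {a\<in>G i \<inter> D. \<tau> a \<le> k} in
        \<lfloor>\<alpha> i * real k\<rfloor> \<le> int c \<and> int c \<le> \<lceil>\<beta> i * real k\<rceil>)"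

definition kendall_tau :: "nat \<Rightarrow> (nat \<Rightarrow> nat) \<Rightarrow> (nat \<Rightarrow> nat) \<Rightarrow> nat" where
  "kendall_tau d \<pi> \<sigma> = card {(a, b). a \<in> {1..d} \<and> b \<in> {1..d} \<and> a < b \<and>
                                 ((\<pi> a < \<pi> b) \<noteq> (\<sigma> a < \<sigma> b))}"

definition cost :: "(nat \<Rightarrow> nat) set \<Rightarrow> nat set \<Rightarrow> (nat \<Rightarrow> nat) \<Rightarrow> int" where
  "cost S D \<tau> = 2 * (\<Sum>\<pi>\<in>S. \<Sum>i\<in>D.
       (int (\<pi> i) - int (\<tau> i)) * (if \<tau> i < \<pi> i then 1 else 0))"

end

theory Submission
  imports Defs
begin

text \<open>Kendall tau K and Spearman footrule F satisfy K \<le> F \<le> 2 K (Diaconis--Graham), and on full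
  rankings the cost is the footrule summed over S, since the displacements \<pi> i - \<sigma> i sum to 0.
  Let s be any fair ranking. Its top k is a fair top-k ranking, so cost(D, \<tau>) \<le> cost(s); and
  extending \<tau> by the remaining items in their order under s ranks none of them higher than s does,
  so the minimality of \<sigma> gives cost(\<sigma>) \<le> cost(D, \<tau>) + cost(s) \<le> 2 cost(s). Hence
  K(\<sigma>) \<le> F(\<sigma>) \<le> 2 F(s) \<le> 4 K(s). Fairness of \<sigma> comes from \<tau>, as the top k of \<sigma> is D.\<close>

lemma bij_betw_rank_le:
  fixes p :: "nat \<Rightarrow> nat"
  assumes p: "p permutes {1..d}" and n: "n \<le> d"
  shows "bij_betw p {b\<in>{1..d}. p b \<le> n} {1..n}"
proof -
  have "p ` {b\<in>{1..d}. p b \<le> n} = {v\<in>p ` {1..d}. v \<le> n}" by blast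
  also have "\<dots> = {1..n}" unfolding permutes_image[OF p] using n by auto
  finally show ?thesis
    unfolding bij_betw_def using inj_on_subset[OF permutes_inj[OF p]] by blast
qed

lemma card_rank_le:
  fixes p :: "nat \<Rightarrow> nat"
  assumes p: "p permutes {1..d}" and x: "x \<in> {1..d}"
  shows "card {b\<in>{1..d}. p b \<le> p x} = p x"
proof -
  have "p x \<le> d" using x permutes_in_image[OF p, of x] by simp
  then show ?thesis using bij_betw_same_card[OF bij_betw_rank_le[OF p]] by simp
qed

lemma card_rank_less:
  fixes p :: "nat \<Rightarrow> nat"
  assumes p: "p permutes {1..d}" and x: "x \<in> {1..d}"
  shows "card {b\<in>{1..d}. p b < p x} = p x - 1"
proof -
  have "1 \<le> p x" "p x \<le> d" using x permutes_in_image[OF p] by auto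
  moreover have "{b\<in>{1..d}. p b < p x} = {b\<in>{1..d}. p b \<le> p x - 1}"
    using \<open>1 \<le> p x\<close> by auto
  ultimately show ?thesis using bij_betw_same_card[OF bij_betw_rank_le[OF p]] by simp
qed

lemma bij_betw_card_rank_le:
  fixes f :: "'a \<Rightarrow> 'b::linorder"
  assumes fin: "finite E" and inj: "inj_on f E"
  shows "bij_betw (\<lambda>x. card {y\<in>E. f y \<le> f x}) E {1..card E}"
proof -
  define \<rho> where "\<rho> x = card {y\<in>E. f y \<le> f x}" for x
  have less: "\<rho> x < \<rho> y" if "y \<in> E" "f x < f y" for x y
  proof -
    have "{z\<in>E. f z \<le> f x} \<subseteq> {z\<in>E. f z \<le> f y}"
      and "y \<in> {z\<in>E. f z \<le> f y} - {z\<in>E. f z \<le> f x}"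
      using that by auto
    then have "{z\<in>E. f z \<le> f x} \<subset> {z\<in>E. f z \<le> f y}" by blast
    then show ?thesis unfolding \<rho>_def using fin by (simp add: psubset_card_mono)
  qed
  have "inj_on \<rho> E"
  proof (rule inj_onI)
    fix x y assume "x \<in> E" "y \<in> E" "\<rho> x = \<rho> y"
    then show "x = y"
      using less[of x y] less[of y x] inj_onD[OF inj] by (metis less_irrefl linorder_neq_iff)
  qed
  moreover have "\<rho> ` E \<subseteq> {1..card E}"
    unfolding \<rho>_def using fin by (auto intro!: card_mono simp: Suc_le_eq card_gt_0_iff)
  moreover have "card (\<rho> ` E) = card {1..card E}"
    using \<open>inj_on \<rho> E\<close> by (simp add: card_image)
  ultimately show ?thesis
    unfolding bij_betw_def \<rho>_def by (simp add: card_subset_eq)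
qed

lemma card_sym_eq_twice_card_less:
  fixes f :: "'a \<Rightarrow> 'b::linorder"
  assumes fin: "finite R" and "sym R" and distinct: "\<forall>(a, b)\<in>R. f a \<noteq> f b"
  shows "card R = 2 * card {(a, b)\<in>R. f a < f b}"
proof -
  define X where "X = {(a, b)\<in>R. f a < f b}"
  have "R = X \<union> prod.swap ` X"
  proof
    show "R \<subseteq> X \<union> prod.swap ` X"
    proof
      fix x assume "x \<in> R"
      then obtain a b where ab: "x = (a, b)" "(a, b) \<in> R" "(b, a) \<in> R"
        using \<open>sym R\<close> by (cases x) (auto dest: symD)
      then have "f a < f b \<or> f b < f a" using distinct by fastforce
      then show "x \<in> X \<union> prod.swap ` X"
        using ab unfolding X_def by (auto simp: image_iff)
    qed
    show "X \<union> prod.swap ` X \<subseteq> R"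
      using \<open>sym R\<close> unfolding X_def by (auto dest: symD)
  qed
  moreover have "X \<inter> prod.swap ` X = {}" unfolding X_def by auto
  moreover have "finite X" using fin unfolding X_def by (rule rev_finite_subset) auto
  ultimately have "card R = card X + card (prod.swap ` X)" by (simp add: card_Un_disjoint)
  then show ?thesis unfolding X_def by (simp add: card_image)
qed

definition inversions :: "nat \<Rightarrow> (nat \<Rightarrow> nat) \<Rightarrow> (nat \<Rightarrow> nat) \<Rightarrow> (nat \<times> nat) set" where
  "inversions d \<pi> \<sigma> = {(a, b). a \<in> {1..d} \<and> b \<in> {1..d} \<and> \<sigma> a < \<sigma> b \<and> \<pi> b < \<pi> a}"

definition discordant_pairs :: "nat \<Rightarrow> (nat \<Rightarrow> nat) \<Rightarrow> (nat \<Rightarrow> nat) \<Rightarrow> (nat \<times> nat) set" where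
  "discordant_pairs d \<pi> \<sigma> =
     {(a, b). a \<in> {1..d} \<and> b \<in> {1..d} \<and> a \<noteq> b \<and> (\<pi> a < \<pi> b) \<noteq> (\<sigma> a < \<sigma> b)}"

lemma discordant_pairs_commute: "discordant_pairs d \<pi> \<sigma> = discordant_pairs d \<sigma> \<pi>"
  unfolding discordant_pairs_def by blast

lemma finite_discordant_pairs: "finite (discordant_pairs d \<pi> \<sigma>)"
  by (rule finite_subset[of _ "{1..d} \<times> {1..d}"]) (auto simp: discordant_pairs_def)

lemma sym_discordant_pairs:
  assumes "inj \<pi>" "inj \<sigma>"
  shows "sym (discordant_pairs d \<pi> \<sigma>)"
  using assms by (auto intro!: symI simp: discordant_pairs_def inj_eq not_less le_less)

lemma card_discordant_pairs:
  assumes "inj \<pi>" "inj \<sigma>"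
  shows "card (discordant_pairs d \<pi> \<sigma>) = 2 * kendall_tau d \<pi> \<sigma>"
proof -
  have "{(a, b)\<in>discordant_pairs d \<pi> \<sigma>. a < b} =
        {(a, b). a \<in> {1..d} \<and> b \<in> {1..d} \<and> a < b \<and> ((\<pi> a < \<pi> b) \<noteq> (\<sigma> a < \<sigma> b))}"
    unfolding discordant_pairs_def by auto
  then show ?thesis
    using card_sym_eq_twice_card_less[OF finite_discordant_pairs sym_discordant_pairs[OF assms],
        where f = id]
    by (simp add: discordant_pairs_def kendall_tau_def)
qed

lemma card_discordant_pairs_inversions:
  assumes "inj \<pi>" "inj \<sigma>"
  shows "card (discordant_pairs d \<pi> \<sigma>) = 2 * card (inversions d \<pi> \<sigma>)"
proof -
  have "\<forall>(a, b)\<in>discordant_pairs d \<pi> \<sigma>. \<sigma> a \<noteq> \<sigma> b"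
    using assms by (auto simp: discordant_pairs_def inj_eq)
  then have "card (discordant_pairs d \<pi> \<sigma>) =
      2 * card {(a, b)\<in>discordant_pairs d \<pi> \<sigma>. \<sigma> a < \<sigma> b}"
    by (rule card_sym_eq_twice_card_less[OF finite_discordant_pairs sym_discordant_pairs[OF assms]])
  also have "{(a, b)\<in>discordant_pairs d \<pi> \<sigma>. \<sigma> a < \<sigma> b} = inversions d \<pi> \<sigma>"
    using assms by (auto simp: discordant_pairs_def inversions_def inj_eq not_less le_less)
  finally show ?thesis .
qed

corollary kendall_tau_eq_card_inversions:
  assumes "inj \<pi>" "inj \<sigma>"
  shows "kendall_tau d \<pi> \<sigma> = card (inversions d \<pi> \<sigma>)"
  using card_discordant_pairs[OF assms] card_discordant_pairs_inversions[OF assms] by simp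

definition footrule :: "nat \<Rightarrow> (nat \<Rightarrow> nat) \<Rightarrow> (nat \<Rightarrow> nat) \<Rightarrow> nat" where
  "footrule d \<pi> \<sigma> = (\<Sum>x\<in>{1..d}. max (\<pi> x) (\<sigma> x) - min (\<pi> x) (\<sigma> x))"

text \<open>Diaconis--Graham: an inversion (a, b) is charged to the rank \<pi> b if it lies between the two
  ranks of a, and otherwise to the rank \<sigma> a + 1, which then lies between the two ranks of b.\<close>
lemma card_inversions_le_footrule:
  assumes "inj \<pi>" "inj \<sigma>"
  shows "card (inversions d \<pi> \<sigma>) \<le> footrule d \<pi> \<sigma>"
proof -
  define T where "T = (SIGMA x:{1..d}. {min (\<pi> x) (\<sigma> x)<..max (\<pi> x) (\<sigma> x)})"
  define h where "h = (\<lambda>(a, b). if \<sigma> a < \<pi> b then (a, \<pi> b) else (b, Suc (\<sigma> a)))"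
  have inj: "inj_on h (inversions d \<pi> \<sigma>)"
  proof (rule inj_onI)
    fix x y assume "x \<in> inversions d \<pi> \<sigma>" "y \<in> inversions d \<pi> \<sigma>" and eq: "h x = h y"
    then obtain a b a' b' where xy: "x = (a, b)" "y = (a', b')"
      and inv: "\<sigma> a < \<sigma> b" "\<pi> b < \<pi> a" "\<sigma> a' < \<sigma> b'" "\<pi> b' < \<pi> a'"
      unfolding inversions_def by auto
    show "x = y"
      using eq inv assms unfolding xy h_def
      by (cases "\<sigma> a < \<pi> b"; cases "\<sigma> a' < \<pi> b'") (auto simp: inj_eq)
  qed
  have "card (inversions d \<pi> \<sigma>) = card (h ` inversions d \<pi> \<sigma>)"
    using inj by (simp add: card_image)
  also have "\<dots> \<le> card T"
    by (rule card_mono) (auto simp: T_def inversions_def h_def split: if_splits)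
  also have "card T = footrule d \<pi> \<sigma>"
    unfolding T_def footrule_def by simp
  finally show ?thesis .
qed

lemma rank_gap_le_card_discordant:
  assumes p: "\<pi> permutes {1..d}" and s: "\<sigma> permutes {1..d}"
    and a: "a \<in> {1..d}" and le: "\<sigma> a \<le> \<pi> a"
  shows "\<pi> a - \<sigma> a \<le> card {b. (a, b) \<in> discordant_pairs d \<pi> \<sigma>}"
proof -
  let ?A = "{b\<in>{1..d}. \<pi> b < \<pi> a}" and ?B = "{b\<in>{1..d}. \<sigma> b < \<sigma> a}"
  have "\<pi> a - \<sigma> a = card ?A - card ?B"
    using card_rank_less[OF p a] card_rank_less[OF s a] permutes_in_image[OF s, of a] a le
    by simp
  also have "\<dots> \<le> card (?A - ?B)" by (rule diff_card_le_card_Diff) simp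
  also have "\<dots> \<le> card {b. (a, b) \<in> discordant_pairs d \<pi> \<sigma>}"
  proof (rule card_mono)
    show "finite {b. (a, b) \<in> discordant_pairs d \<pi> \<sigma>}"
      by (rule finite_subset[of _ "{1..d}"]) (auto simp: discordant_pairs_def)
    show "?A - ?B \<subseteq> {b. (a, b) \<in> discordant_pairs d \<pi> \<sigma>}"
      using a permutes_inj[OF s] by (auto simp: discordant_pairs_def inj_eq not_less le_less)
  qed
  finally show ?thesis .
qed

lemma footrule_le_twice_kendall_tau:
  assumes p: "\<pi> permutes {1..d}" and s: "\<sigma> permutes {1..d}"
  shows "footrule d \<pi> \<sigma> \<le> 2 * kendall_tau d \<pi> \<sigma>"
proof -
  let ?C = "\<lambda>a. {b. (a, b) \<in> discordant_pairs d \<pi> \<sigma>}"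
  have "footrule d \<pi> \<sigma> \<le> (\<Sum>a\<in>{1..d}. card (?C a))"
    unfolding footrule_def
  proof (rule sum_mono)
    fix a assume a: "a \<in> {1..d}"
    show "max (\<pi> a) (\<sigma> a) - min (\<pi> a) (\<sigma> a) \<le> card (?C a)"
    proof (cases "\<sigma> a \<le> \<pi> a")
      case True
      then show ?thesis using rank_gap_le_card_discordant[OF p s a] by simp
    next
      case False
      then show ?thesis
        using rank_gap_le_card_discordant[OF s p a] by (simp add: discordant_pairs_commute)
    qed
  qed
  also have "\<dots> = card (SIGMA a:{1..d}. ?C a)"
    by (simp add: finite_subset[of _ "{1..d}"] discordant_pairs_def)
  also have "(SIGMA a:{1..d}. ?C a) = discordant_pairs d \<pi> \<sigma>"
    by (auto simp: discordant_pairs_def)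
  also have "card \<dots> = 2 * kendall_tau d \<pi> \<sigma>"
    using card_discordant_pairs permutes_inj p s by blast
  finally show ?thesis .
qed

lemma cost_mono:
  assumes "finite B" "A \<subseteq> B"
  shows "cost S A f \<le> cost S B f"
  unfolding cost_def by (intro mult_left_mono sum_mono sum_mono2[OF assms]) auto

lemma cost_Un_disjoint:
  assumes "finite A" "finite B" "A \<inter> B = {}"
  shows "cost S (A \<union> B) f = cost S A f + cost S B f"
  unfolding cost_def using assms by (simp add: sum.union_disjoint sum.distrib distrib_left)

lemma cost_cong: "(\<And>i. i \<in> A \<Longrightarrow> f i = g i) \<Longrightarrow> cost S A f = cost S A g"
  unfolding cost_def by simp

lemma cost_antimono:
  assumes "\<And>i. i \<in> A \<Longrightarrow> g i \<le> f i"
  shows "cost S A f \<le> cost S A g"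
  unfolding cost_def by (intro mult_left_mono sum_mono) (force dest: assms, simp)

text \<open>The displacements \<pi> i - \<sigma> i of two permutations sum to 0, so their positive parts make up
  half of the footrule.\<close>
lemma footrule_eq_twice_sum_excess:
  assumes p: "\<pi> permutes {1..d}" and s: "\<sigma> permutes {1..d}"
  shows "int (footrule d \<pi> \<sigma>) =
           2 * (\<Sum>i\<in>{1..d}. (int (\<pi> i) - int (\<sigma> i)) * (if \<sigma> i < \<pi> i then 1 else 0))"
proof -
  have "(\<Sum>i\<in>{1..d}. int (\<pi> i)) = (\<Sum>i\<in>{1..d}. int (\<sigma> i))"
    using sum.permute[OF p, of int] sum.permute[OF s, of int] by simp
  then have zero: "(\<Sum>i\<in>{1..d}. int (\<pi> i) - int (\<sigma> i)) = 0"
    by (simp add: sum_subtractf)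
  have "int (footrule d \<pi> \<sigma>) =
      (\<Sum>i\<in>{1..d}. 2 * ((int (\<pi> i) - int (\<sigma> i)) * (if \<sigma> i < \<pi> i then 1 else 0))
                     - (int (\<pi> i) - int (\<sigma> i)))"
    unfolding footrule_def of_nat_sum by (rule sum.cong) auto
  also have "\<dots> = 2 * (\<Sum>i\<in>{1..d}. (int (\<pi> i) - int (\<sigma> i)) * (if \<sigma> i < \<pi> i then 1 else 0))"
    using zero by (simp add: sum_subtractf sum_distrib_left)
  finally show ?thesis .
qed

lemma cost_eq_sum_footrule:
  assumes "S \<subseteq> rankings d" "\<sigma> permutes {1..d}"
  shows "cost S {1..d} \<sigma> = int (\<Sum>\<pi>\<in>S. footrule d \<pi> \<sigma>)"
  using assms footrule_eq_twice_sum_excess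
  by (auto simp: cost_def rankings_def sum_distrib_left intro!: sum.cong)

lemma sum_kendall_tau_le_of_cost_le:
  assumes S: "S \<subseteq> rankings d" and s: "\<sigma> permutes {1..d}" and s': "\<sigma>' permutes {1..d}"
    and cost_le: "cost S {1..d} \<sigma> \<le> 2 * cost S {1..d} \<sigma>'"
  shows "(\<Sum>\<pi>\<in>S. kendall_tau d \<pi> \<sigma>) \<le> 4 * (\<Sum>\<pi>\<in>S. kendall_tau d \<pi> \<sigma>')"
proof -
  have perm: "\<pi> permutes {1..d}" if "\<pi> \<in> S" for \<pi>
    using that S by (auto simp: rankings_def)
  have "(\<Sum>\<pi>\<in>S. kendall_tau d \<pi> \<sigma>) \<le> (\<Sum>\<pi>\<in>S. footrule d \<pi> \<sigma>)"
    using perm s kendall_tau_eq_card_inversions card_inversions_le_footrule permutes_inj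
    by (metis sum_mono)
  also have "\<dots> \<le> 2 * (\<Sum>\<pi>\<in>S. footrule d \<pi> \<sigma>')"
    using cost_le cost_eq_sum_footrule[OF S s] cost_eq_sum_footrule[OF S s'] by linarith
  also have "\<dots> \<le> 2 * (\<Sum>\<pi>\<in>S. 2 * kendall_tau d \<pi> \<sigma>')"
    using perm s' footrule_le_twice_kendall_tau by (simp add: sum_mono)
  finally show ?thesis by (simp add: sum_distrib_left)
qed

text \<open>Placing the items outside D after \<tau>, in their order under s, ranks none of them higher
  than s does.\<close>
lemma extension_ranks_above:
  assumes tau: "is_topk d k D \<tau>" and s: "s permutes {1..d}"
  obtains r where "r permutes {1..d}" "\<forall>a\<in>D. r a = \<tau> a" "\<forall>x\<in>{1..d} - D. s x \<le> r x"
proof -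
  define E where "E = {1..d} - D"
  define \<rho> where "\<rho> x = card {y\<in>E. s y \<le> s x}" for x
  define r where "r x = (if x \<in> D then \<tau> x else if x \<in> E then k + \<rho> x else x)" for x
  have D: "D \<subseteq> {1..d}" and \<tau>_bij: "bij_betw \<tau> D {1..k}" using tau by (auto simp: is_topk_def)
  have "finite D" using D(1) by (rule finite_subset) simp
  have "card D = k" using bij_betw_same_card[OF \<tau>_bij] by simp
  have "k \<le> d" using card_mono[OF _ D] \<open>card D = k\<close> by simp
  have "card E = d - k" using card_Diff_subset[OF \<open>finite D\<close> D] \<open>card D = k\<close> by (simp add: E_def)
  have "bij_betw \<rho> E {1..d - k}"
    using bij_betw_card_rank_le[of E s] permutes_inj_on[OF s] \<open>card E = d - k\<close>
    unfolding \<rho>_def by (simp add: E_def)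
  moreover have "bij_betw ((+) k) {1..d - k} {k + 1..d}"
    using \<open>k \<le> d\<close> by (simp add: bij_betw_def)
  ultimately have "bij_betw (\<lambda>x. k + \<rho> x) E {k + 1..d}"
    using bij_betw_trans by (fastforce simp: comp_def)
  then have r_E: "bij_betw r E {k + 1..d}"
    by (rule bij_betw_cong[THEN iffD2, rotated]) (simp add: r_def E_def)
  have r_D: "bij_betw r D {1..k}"
    using \<tau>_bij by (rule bij_betw_cong[THEN iffD2, rotated]) (simp add: r_def)
  have "D \<union> E = {1..d}" "{1..k} \<union> {k + 1..d} = {1..d}"
    using D \<open>k \<le> d\<close> by (auto simp: E_def)
  then have "bij_betw r {1..d} {1..d}"
    using bij_betw_combine[OF r_D r_E] by fastforce
  then have "r permutes {1..d}"
    by (rule bij_imp_permutes) (use D in \<open>auto simp: r_def E_def\<close>)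
  moreover have "s x \<le> r x" if x: "x \<in> {1..d} - D" for x
  proof -
    have "s x = card {b\<in>{1..d}. s b \<le> s x}" using card_rank_le[OF s] x by simp
    also have "\<dots> \<le> card ({y\<in>E. s y \<le> s x} \<union> D)"
      using \<open>finite D\<close> by (intro card_mono) (auto simp: E_def)
    also have "\<dots> \<le> \<rho> x + k"
      using card_Un_le[of "{y\<in>E. s y \<le> s x}" D] \<open>card D = k\<close> unfolding \<rho>_def by simp
    finally show ?thesis using x by (simp add: r_def E_def)
  qed
  ultimately show ?thesis using that by (simp add: r_def)
qed

lemma extension_rank_le_iff:
  assumes tau: "is_topk d k D \<tau>" and s: "\<sigma> permutes {1..d}" and ext: "\<forall>a\<in>D. \<sigma> a = \<tau> a"
    and a: "a \<in> {1..d}"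
  shows "\<sigma> a \<le> k \<longleftrightarrow> a \<in> D"
proof
  have \<tau>_img: "\<tau> ` D = {1..k}" using tau by (simp add: is_topk_def bij_betw_def)
  assume "\<sigma> a \<le> k"
  moreover have "1 \<le> \<sigma> a" using a permutes_in_image[OF s, of a] by simp
  ultimately obtain b where "b \<in> D" "\<sigma> a = \<tau> b" using \<tau>_img by (metis atLeastAtMost_iff imageE)
  then show "a \<in> D" using ext permutes_inj[OF s] by (metis injD)
next
  assume "a \<in> D"
  then show "\<sigma> a \<le> k" using tau ext by (auto simp: is_topk_def bij_betw_def)
qed

lemma fair_full_iff_fair_topk:
  assumes G: "\<forall>i\<in>{1..g}. G i \<subseteq> {1..d}"
    and top: "\<forall>a\<in>{1..d}. \<sigma> a \<le> k \<longleftrightarrow> a \<in> D" and ext: "\<forall>a\<in>D. \<sigma> a = \<tau> a"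
  shows "fair_full g G \<alpha> \<beta> k \<sigma> \<longleftrightarrow> fair_topk g G \<alpha> \<beta> k D \<tau>"
proof -
  have "{a\<in>G i. \<sigma> a \<le> k} = {a\<in>G i \<inter> D. \<tau> a \<le> k}" if i: "i \<in> {1..g}" for i
  proof (rule set_eqI)
    fix a
    show "a \<in> {a\<in>G i. \<sigma> a \<le> k} \<longleftrightarrow> a \<in> {a\<in>G i \<inter> D. \<tau> a \<le> k}"
    proof (cases "a \<in> G i")
      case True
      then have "a \<in> {1..d}" using G i by blast
      then have "\<sigma> a \<le> k \<longleftrightarrow> a \<in> D" by (rule bspec[OF top])
      then show ?thesis using ext True by auto
    qed simp
  qed
  then show ?thesis unfolding fair_full_def fair_topk_def by simp
qed

lemma cost_min_fair_topk_le:
  assumes G: "\<forall>i\<in>{1..g}. G i \<subseteq> {1..d}" and "k \<le> d"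
    and s: "s permutes {1..d}" "fair_full g G \<alpha> \<beta> k s"
    and tau_min: "\<forall>D' \<tau>'. is_topk d k D' \<tau>' \<and> fair_topk g G \<alpha> \<beta> k D' \<tau>' \<longrightarrow>
                     cost S D \<tau> \<le> cost S D' \<tau>'"
  shows "cost S D \<tau> \<le> cost S {1..d} s"
proof -
  define D' where "D' = {a\<in>{1..d}. s a \<le> k}"
  have "is_topk d k D' s"
    unfolding is_topk_def D'_def using bij_betw_rank_le[OF s(1) \<open>k \<le> d\<close>] by auto
  moreover have "fair_topk g G \<alpha> \<beta> k D' s"
    using fair_full_iff_fair_topk[OF G, of s k D' s] s(2) by (simp add: D'_def)
  ultimately have "cost S D \<tau> \<le> cost S D' s" using tau_min by blast
  also have "\<dots> \<le> cost S {1..d} s" by (rule cost_mono) (auto simp: D'_def)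
  finally show ?thesis .
qed

lemma cost_min_extension_le:
  assumes tau: "is_topk d k D \<tau>" and s: "s permutes {1..d}"
    and \<sigma>_min: "\<forall>\<sigma>'\<in>rankings d. (\<forall>a\<in>D. \<sigma>' a = \<tau> a) \<longrightarrow> cost S {1..d} \<sigma> \<le> cost S {1..d} \<sigma>'"
  shows "cost S {1..d} \<sigma> \<le> cost S D \<tau> + cost S {1..d} s"
proof -
  obtain r where r: "r permutes {1..d}" "\<forall>a\<in>D. r a = \<tau> a" "\<forall>x\<in>{1..d} - D. s x \<le> r x"
    using extension_ranks_above[OF tau s] .
  have D: "D \<subseteq> {1..d}" using tau by (simp add: is_topk_def)
  have "cost S {1..d} \<sigma> \<le> cost S {1..d} r" using \<sigma>_min r by (simp add: rankings_def)
  also have "\<dots> = cost S (D \<union> ({1..d} - D)) r" using D by (simp add: Un_absorb1)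
  also have "\<dots> = cost S D r + cost S ({1..d} - D) r"
    using finite_subset[OF D] by (intro cost_Un_disjoint) auto
  also have "cost S D r = cost S D \<tau>" using r(2) by (intro cost_cong) simp
  also have "cost S ({1..d} - D) r \<le> cost S ({1..d} - D) s" using r(3) by (intro cost_antimono) simp
  also have "\<dots> \<le> cost S {1..d} s" by (rule cost_mono) auto
  finally show ?thesis by simp
qed

theorem mainTheorem8:
  fixes d g k :: nat and S :: "(nat \<Rightarrow> nat) set" and G :: "nat \<Rightarrow> nat set"
    and \<alpha> \<beta> :: "nat \<Rightarrow> real" and D :: "nat set" and \<tau> \<sigma> :: "nat \<Rightarrow> nat"
  assumes S_sub: "S \<subseteq> rankings d" and S_ne: "S \<noteq> {}"
    and part: "is_partition d g G"
    and alpha: "\<forall>i\<in>{1..g}. 0 \<le> \<alpha> i \<and> \<alpha> i \<le> 1"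
    and beta: "\<forall>i\<in>{1..g}. 0 \<le> \<beta> i \<and> \<beta> i \<le> 1"
    and k: "1 \<le> k" "k \<le> d"
    and F_ne: "{\<pi>\<in>rankings d. fair_full g G \<alpha> \<beta> k \<pi>} \<noteq> {}"
    and tau: "is_topk d k D \<tau>" "fair_topk g G \<alpha> \<beta> k D \<tau>"
    and tau_min: "\<forall>D' \<tau>'. is_topk d k D' \<tau>' \<and> fair_topk g G \<alpha> \<beta> k D' \<tau>' \<longrightarrow>
                     cost S D \<tau> \<le> cost S D' \<tau>'"
    and sigma: "\<sigma> \<in> rankings d" "\<forall>a\<in>D. \<sigma> a = \<tau> a"
    and sigma_min: "\<forall>\<sigma>'\<in>rankings d. (\<forall>a\<in>D. \<sigma>' a = \<tau> a) \<longrightarrow>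
                     cost S {1..d} \<sigma> \<le> cost S {1..d} \<sigma>'"
  shows "\<sigma> \<in> {\<pi>\<in>rankings d. fair_full g G \<alpha> \<beta> k \<pi>} \<and>
         (\<Sum>\<pi>\<in>S. kendall_tau d \<pi> \<sigma>) \<le>
           4 * Min ((\<lambda>\<sigma>'. \<Sum>\<pi>\<in>S. kendall_tau d \<pi> \<sigma>') ` {\<pi>\<in>rankings d. fair_full g G \<alpha> \<beta> k \<pi>})"
proof -
  let ?F = "{\<pi>\<in>rankings d. fair_full g G \<alpha> \<beta> k \<pi>}"
  let ?K = "\<lambda>\<sigma>'. \<Sum>\<pi>\<in>S. kendall_tau d \<pi> \<sigma>'"
  have G: "\<forall>i\<in>{1..g}. G i \<subseteq> {1..d}" using part by (auto simp: is_partition_def)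
  have \<sigma>_perm: "\<sigma> permutes {1..d}" using sigma(1) by (simp add: rankings_def)
  have "fair_full g G \<alpha> \<beta> k \<sigma>"
    using fair_full_iff_fair_topk[OF G _ sigma(2)] extension_rank_le_iff[OF tau(1) \<sigma>_perm sigma(2)]
      tau(2)
    by blast
  moreover have "?K \<sigma> \<le> 4 * ?K s" if "s \<in> ?F" for s
  proof -
    have s: "s permutes {1..d}" "fair_full g G \<alpha> \<beta> k s" using that by (auto simp: rankings_def)
    have "cost S {1..d} \<sigma> \<le> cost S D \<tau> + cost S {1..d} s"
      using cost_min_extension_le[OF tau(1) s(1) sigma_min] .
    moreover have "cost S D \<tau> \<le> cost S {1..d} s"
      using cost_min_fair_topk_le[OF G k(2) s tau_min] .
    ultimately show ?thesis
      using sum_kendall_tau_le_of_cost_le[OF S_sub \<sigma>_perm s(1)] by linarith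
  qed
  moreover have "Min (?K ` ?F) \<in> ?K ` ?F"
    using F_ne by (intro Min_in) (simp_all add: rankings_def finite_permutations)
  ultimately show ?thesis using sigma(1) by auto
qed

end
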